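(* Let $(\mathfrak{h},[\;,\;],\langle\;,\;\rangle_{\mathfrak{h}})$ be an Einstein Lorentzian nilpotent Lie algebra whose center $\mathrm{Z}(\mathfrak{h})$ is nondegenerate and Euclidean (positive definite), and let $\mathfrak{g}$, $[\;,\;]_{\mathfrak{g}}$, $\langle\;,\;\rangle_{\mathfrak{g}}$, $\omega$ be as in the context. If for all $u,v,w\in\mathfrak{g}$ one has $\omega(\mathrm{ad}_u^*v,w)+\omega(v,\mathrm{ad}_u^*w)=0$, then $(\mathfrak{g},[\;,\;]_{\mathfrak{g}},\langle\;,\;\rangle_{\mathfrak{g}})$ is a Ricci-soliton.
   Context: Setting: $\mathfrak{h}$ real finite-dimensional nilpotent Lie algebra with Lorentzian inner product, center $\mathrm{Z}(\mathfrak{h})$ nondegenerate with positive definite restriction $\langle\;,\;\rangle_z$. $\mathfrak{g}=\mathrm{Z}(\mathfrak{h})^\perp$ with restricted inner product $\langle\;,\;\rangle_{\mathfrak{g}}$; for $u,v\in\mathfrak{g}$, $[u,v]=[u,v]_{\mathfrak{g}}+\omega(u,v)$ with $[u,v]_{\mathfrak{g}}\in\mathfrak{g}$, $\omega(u,v)\in\mathrm{Z}(\mathfrak{h})$, and $(\mathfrak{g},[\;,\;]_{\mathfrak{g}})$ is a Lie algebra. $\mathrm{ad}_u(v)=[u,v]_{\mathfrak{g}}$ and $\mathrm{ad}_u^*$ is its adjoint w.r.t. $\langle\;,\;\rangle_{\mathfrak{g}}$. Ricci curvature is defined via the Levi-Civita product $2\langle \mathrm{L}_uv,w\rangle=\langle[u,v],w\rangle+\langle[w,u],v\rangle+\langle[w,v],u\rangle$,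 $K(u,v)=\mathrm{L}_{[u,v]}-[\mathrm{L}_u,\mathrm{L}_v]$, $\mathrm{ric}(u,v)=\mathrm{tr}(w\mapsto K(u,w)v)$, $\langle\mathrm{Ric}\,u,v\rangle=\mathrm{ric}(u,v)$; Einstein means $\mathrm{Ric}=\lambda\,\mathrm{Id}$ for some $\lambda\in\mathbb{R}$. A pseudo-Euclidean Lie algebra is a Ricci-soliton if there exist $\lambda\in\mathbb{R}$ and a derivation $D$ of it with $\mathrm{Ric}=\lambda\,\mathrm{Id}+D$. *)

theory Defs
  imports "HOL-Analysis.Analysis"
begin

text \<open>A finite-dimensional real vector space is modelled by a type of class
euclidean_space (its own inner product is used ONLY to make the space a
finite-dimensional real vector space; the pseudo-Euclidean metric is a separate
symmetric bilinear form B).\<close>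

definition bilinear_form :: "('a::real_vector \<Rightarrow> 'a \<Rightarrow> real) \<Rightarrow> bool" where
  "bilinear_form B \<longleftrightarrow> (\<forall>x. linear (B x)) \<and> (\<forall>y. linear (\<lambda>x. B x y))"

definition sym_form :: "('a \<Rightarrow> 'a \<Rightarrow> real) \<Rightarrow> bool" where
  "sym_form B \<longleftrightarrow> (\<forall>x y. B x y = B y x)"

text \<open>Lorentzian inner product: symmetric bilinear form of signature (n-1,1),
i.e. there is a timelike vector e whose B-orthogonal complement is spacelike.\<close>
definition lorentzian :: "('a::real_vector \<Rightarrow> 'a \<Rightarrow> real) \<Rightarrow> bool" where
  "lorentzian B \<longleftrightarrow> bilinear_form B \<and> sym_form B \<and>
     (\<exists>e. B e e < 0 \<and> (\<forall>x. B x e = 0 \<and> x \<noteq> 0 \<longrightarrow> B x x > 0))"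

definition lie_algebra :: "('a::real_vector \<Rightarrow> 'a \<Rightarrow> 'a) \<Rightarrow> bool" where
  "lie_algebra br \<longleftrightarrow> (\<forall>x. linear (br x)) \<and> (\<forall>y. linear (\<lambda>x. br x y)) \<and>
     (\<forall>x. br x x = 0) \<and>
     (\<forall>x y z. br x (br y z) + br y (br z x) + br z (br x y) = 0)"

fun lower_central :: "('a::real_vector \<Rightarrow> 'a \<Rightarrow> 'a) \<Rightarrow> nat \<Rightarrow> 'a set" where
  "lower_central br 0 = UNIV"
| "lower_central br (Suc k) = span {br x y | x y. y \<in> lower_central br k}"

definition nilpotent_lie :: "('a::real_vector \<Rightarrow> 'a \<Rightarrow> 'a) \<Rightarrow> bool" where
  "nilpotent_lie br \<longleftrightarrow> lie_algebra br \<and> (\<exists>k. lower_central br k = {0})"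

definition center :: "('a::real_vector \<Rightarrow> 'a \<Rightarrow> 'a) \<Rightarrow> 'a set" where
  "center br = {z. \<forall>x. br z x = 0}"

definition orth_compl :: "('a \<Rightarrow> 'a \<Rightarrow> real) \<Rightarrow> 'a set \<Rightarrow> 'a set" where
  "orth_compl B S = {u. \<forall>z\<in>S. B u z = 0}"

text \<open>Trace of a linear map f of a finite-dimensional subspace V into itself,
computed in a (chosen) basis of V; this is independent of the basis.\<close>
definition trace_on :: "'a::euclidean_space set \<Rightarrow> ('a \<Rightarrow> 'a) \<Rightarrow> real" where
  "trace_on V f = (let Bs = (SOME Bs. independent Bs \<and> span Bs = V)
                   in \<Sum>b\<in>Bs. representation Bs (f b) b)"

definition levi_civita ::
  "'a::real_vector set \<Rightarrow> ('a \<Rightarrow> 'a \<Rightarrow> 'a) \<Rightarrow> ('a \<Rightarrow> 'a \<Rightarrow> real) \<Rightarrow> 'a \<Rightarrow> 'a \<Rightarrow> 'a" where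
  "levi_civita V br B u v = (THE x. x \<in> V \<and> (\<forall>w\<in>V.
      2 * B x w = B (br u v) w + B (br w u) v + B (br w v) u))"

definition curv ::
  "'a::real_vector set \<Rightarrow> ('a \<Rightarrow> 'a \<Rightarrow> 'a) \<Rightarrow> ('a \<Rightarrow> 'a \<Rightarrow> real) \<Rightarrow> 'a \<Rightarrow> 'a \<Rightarrow> 'a \<Rightarrow> 'a" where
  "curv V br B u v x = (let L = levi_civita V br B in
      L (br u v) x - (L u (L v x) - L v (L u x)))"

definition ric ::
  "'a::euclidean_space set \<Rightarrow> ('a \<Rightarrow> 'a \<Rightarrow> 'a) \<Rightarrow> ('a \<Rightarrow> 'a \<Rightarrow> real) \<Rightarrow> 'a \<Rightarrow> 'a \<Rightarrow> real" where
  "ric V br B u v = trace_on V (\<lambda>w. curv V br B u w v)"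

text \<open>Einstein: Ric = \<lambda> Id, where B (Ric u) v = ric(u,v); i.e. ric(u,v) = \<lambda> B u v on V.\<close>
definition einstein ::
  "'a::euclidean_space set \<Rightarrow> ('a \<Rightarrow> 'a \<Rightarrow> 'a) \<Rightarrow> ('a \<Rightarrow> 'a \<Rightarrow> real) \<Rightarrow> bool" where
  "einstein V br B \<longleftrightarrow> (\<exists>c::real. \<forall>u\<in>V. \<forall>v\<in>V. ric V br B u v = c * B u v)"

definition derivation_on :: "'a::real_vector set \<Rightarrow> ('a \<Rightarrow> 'a \<Rightarrow> 'a) \<Rightarrow> ('a \<Rightarrow> 'a) \<Rightarrow> bool" where
  "derivation_on V br D \<longleftrightarrow> (\<forall>x\<in>V. D x \<in> V) \<and>
     (\<forall>x\<in>V. \<forall>y\<in>V. \<forall>a b. D (a *\<^sub>R x + b *\<^sub>R y) = a *\<^sub>R D x + b *\<^sub>R D y) \<and>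
     (\<forall>x\<in>V. \<forall>y\<in>V. D (br x y) = br (D x) y + br x (D y))"

text \<open>Ricci soliton: Ric = \<lambda> Id + D with D a derivation, i.e.
ric(u,v) = \<lambda> B u v + B (D u) v on V.\<close>
definition ricci_soliton ::
  "'a::euclidean_space set \<Rightarrow> ('a \<Rightarrow> 'a \<Rightarrow> 'a) \<Rightarrow> ('a \<Rightarrow> 'a \<Rightarrow> real) \<Rightarrow> bool" where
  "ricci_soliton V br B \<longleftrightarrow> (\<exists>(c::real) D. derivation_on V br D \<and>
     (\<forall>u\<in>V. \<forall>v\<in>V. ric V br B u v = c * B u v + B (D u) v))"

text \<open>Decomposition h = g \<oplus> Z(h), g = Z(h)^\<bottom>.  proj_center x is the Z(h)-component.\<close>
definition gpart :: "('a::real_vector \<Rightarrow> 'a \<Rightarrow> 'a) \<Rightarrow> ('a \<Rightarrow> 'a \<Rightarrow> real) \<Rightarrow> 'a set" where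
  "gpart br B = orth_compl B (center br)"

definition proj_center :: "('a::real_vector \<Rightarrow> 'a \<Rightarrow> 'a) \<Rightarrow> ('a \<Rightarrow> 'a \<Rightarrow> real) \<Rightarrow> 'a \<Rightarrow> 'a" where
  "proj_center br B x = (THE z. z \<in> center br \<and> x - z \<in> gpart br B)"

definition omega :: "('a::real_vector \<Rightarrow> 'a \<Rightarrow> 'a) \<Rightarrow> ('a \<Rightarrow> 'a \<Rightarrow> real) \<Rightarrow> 'a \<Rightarrow> 'a \<Rightarrow> 'a" where
  "omega br B u v = proj_center br B (br u v)"

definition br_g :: "('a::real_vector \<Rightarrow> 'a \<Rightarrow> 'a) \<Rightarrow> ('a \<Rightarrow> 'a \<Rightarrow> real) \<Rightarrow> 'a \<Rightarrow> 'a \<Rightarrow> 'a" where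
  "br_g br B u v = br u v - proj_center br B (br u v)"

definition ad_star :: "('a::real_vector \<Rightarrow> 'a \<Rightarrow> 'a) \<Rightarrow> ('a \<Rightarrow> 'a \<Rightarrow> real) \<Rightarrow> 'a \<Rightarrow> 'a \<Rightarrow> 'a" where
  "ad_star br B u w = (THE x. x \<in> gpart br B \<and>
      (\<forall>v\<in>gpart br B. B (br_g br B u v) w = B v x))"

end

(*
  Write h = g + Z(h) (orthogonal sum) and, for z in Z(h), let j(z) be the map of g
  with <j(z) u, w> = <z, omega(u, w)>; it is skew-adjoint.  The Koszul formula expresses
  the Levi-Civita product of h through that of g, omega and j.  Taking traces in a basis
  (z_i) of Z(h) with B-dual basis (z_i') and in a dual pair of bases of g gives,
  for u, v in g,

    ric_h(u, v) = ric_g(u, v) - 1/2 * sum_i <j(z_i') u, j(z_i) v>.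

  So if h is Einstein with constant c, then Ric_g = c Id + D with
  D = -1/2 * sum_i j(z_i) j(z_i').  The Jacobi identity gives the cocycle relation
  j(z) [u, v]_g = ad_v^* j(z) u - ad_u^* j(z) v, and the hypothesis says precisely
  j(z) ad_u^* = - ad_u j(z); together they make every j(z) j(z') a derivation of g.
*)

theory Submission
  imports Defs
begin

lemma bilinear_form_iff_bilinear: "bilinear_form B \<longleftrightarrow> bilinear B"
  unfolding bilinear_form_def bilinear_def by simp

lemma sym_formD: "sym_form B \<Longrightarrow> B x y = B y x"
  unfolding sym_form_def by blast

lemma bilinear_sum_left: "bilinear h \<Longrightarrow> h (sum f S) y = (\<Sum>i\<in>S. h (f i) y)"
  unfolding bilinear_def using linear_sum[of "\<lambda>x. h x y"] by blast

lemma bilinear_sum_right: "bilinear h \<Longrightarrow> h x (sum f S) = (\<Sum>i\<in>S. h x (f i))"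
  unfolding bilinear_def using linear_sum[of "h x"] by blast

lemmas bilinear_simps = bilinear_ladd bilinear_radd bilinear_lmul bilinear_rmul
  bilinear_lneg bilinear_rneg bilinear_lzero bilinear_rzero bilinear_lsub bilinear_rsub
  bilinear_sum_left bilinear_sum_right

lemma bilinear_linear_left: "bilinear h \<Longrightarrow> linear (\<lambda>x. h x y)"
  and bilinear_linear_right: "bilinear h \<Longrightarrow> linear (h x)"
  unfolding bilinear_def by auto

lemma linear_compose_bilinear: "linear f \<Longrightarrow> bilinear h \<Longrightarrow> bilinear (\<lambda>x y. f (h x y))"
  unfolding bilinear_def linear_iff by simp

lemma bilinear_compose_linear:
  "bilinear h \<Longrightarrow> linear f \<Longrightarrow> linear g \<Longrightarrow> bilinear (\<lambda>x y. h (f x) (g y))"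
  unfolding bilinear_def linear_iff by simp

lemma bilinear_diff: "bilinear f \<Longrightarrow> bilinear g \<Longrightarrow> bilinear (\<lambda>x y. f x y - g x y)"
  unfolding bilinear_def by (auto intro: linear_compose_sub)

lemma subspace_eq_span_basis:
  assumes "subspace V"
  obtains C where "independent C" "span C = V"
proof -
  obtain C where "C \<subseteq> V" "independent C" "V \<subseteq> span C"
    using basis_exists[of V] by metis
  with assms show thesis
    by (metis span_minimal subset_antisym that)
qed

section \<open>Nondegenerate forms and dual bases\<close>

definition nondegenerate_on :: "('a::real_vector \<Rightarrow> 'a \<Rightarrow> real) \<Rightarrow> 'a set \<Rightarrow> bool" where
  "nondegenerate_on B V \<longleftrightarrow> (\<forall>x\<in>V. (\<forall>y\<in>V. B x y = 0) \<longrightarrow> x = 0)"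

lemma nondegenerate_onD:
  "nondegenerate_on B V \<Longrightarrow> x \<in> V \<Longrightarrow> (\<And>y. y \<in> V \<Longrightarrow> B x y = 0) \<Longrightarrow> x = 0"
  unfolding nondegenerate_on_def by blast

lemma nondegenerate_on_eqI:
  assumes V: "subspace V" and B: "bilinear B" and nd: "nondegenerate_on B V"
    and "x \<in> V" "y \<in> V" "\<And>w. w \<in> V \<Longrightarrow> B x w = B y w"
  shows "x = y"
  using nondegenerate_onD[OF nd, of "x - y"] assms subspace_diff[OF V]
  by (simp add: bilinear_simps[OF B])

lemma lorentzian_nondegenerate:
  assumes "lorentzian B"
  shows "nondegenerate_on B UNIV"
proof -
  obtain e where e: "B e e < 0" "\<And>x. B x e = 0 \<Longrightarrow> x \<noteq> 0 \<Longrightarrow> B x x > 0"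
    using assms unfolding lorentzian_def by blast
  show ?thesis
    unfolding nondegenerate_on_def using e by force
qed

lemma linear_inj_on_image_eq:
  fixes T :: "'a::euclidean_space \<Rightarrow> 'a"
  assumes T: "linear T" and V: "subspace V" and TV: "T ` V \<subseteq> V" and inj: "inj_on T V"
  shows "T ` V = V"
proof -
  have "dim (T ` V) = dim V"
    using dim_image_eq[OF T, of V] V inj span_eq_iff[of V] by metis
  then show ?thesis
    using subspace_dim_equal[OF linear_subspace_image[OF T V] V TV] by simp
qed

text \<open>Riesz representation: the map \<open>x \<mapsto> \<Sum>b\<in>C. B x b *\<^sub>R b\<close> on \<open>V = span C\<close> is injective
  by nondegeneracy, hence onto \<open>V\<close>; a preimage of \<open>\<Sum>b\<in>C. \<phi> b *\<^sub>R b\<close> represents \<open>\<phi>\<close>.\<close>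

lemma nondegenerate_on_represents:
  fixes B :: "'a::euclidean_space \<Rightarrow> 'a \<Rightarrow> real"
  assumes V: "subspace V" and B: "bilinear B" and nd: "nondegenerate_on B V"
    and \<phi>: "linear \<phi>"
  shows "\<exists>x\<in>V. \<forall>w\<in>V. B x w = \<phi> w"
proof -
  obtain C where C: "independent C" "span C = V"
    using subspace_eq_span_basis[OF V] .
  have CV: "C \<subseteq> V" using span_superset[of C] C(2) by simp
  have coeffs_zero: "\<forall>b\<in>C. f b = 0" if "(\<Sum>b\<in>C. f b *\<^sub>R b) = 0" for f
    using C(1) that unfolding independent_explicit by auto
  have vanish: "\<forall>w\<in>V. \<psi> w = 0" if "linear \<psi>" "\<forall>b\<in>C. \<psi> b = 0" for \<psi> :: "'a \<Rightarrow> real"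
    using linear_eq_0_on_span[of \<psi> C] that C(2) by blast
  define T where "T x = (\<Sum>b\<in>C. B x b *\<^sub>R b)" for x
  have T: "linear T"
    by (rule linearI)
      (simp_all add: T_def bilinear_simps[OF B] scaleR_add_left sum.distrib scaleR_sum_right)
  have TV: "T ` V \<subseteq> V"
    unfolding T_def using CV V by (auto intro!: subspace_sum subspace_scale)
  have "inj_on T V"
  proof (rule inj_onI)
    fix x y assume xy: "x \<in> V" "y \<in> V" "T x = T y"
    have "T (x - y) = 0" using xy linear_diff[OF T] by simp
    then have "\<forall>b\<in>C. B (x - y) b = 0" unfolding T_def by (rule coeffs_zero)
    then have "\<forall>w\<in>V. B (x - y) w = 0"
      by (rule vanish[OF bilinear_linear_right[OF B]])
    then show "x = y"
      using nondegenerate_onD[OF nd, of "x - y"] subspace_diff[OF V xy(1,2)] by simp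
  qed
  then have "T ` V = V"
    by (rule linear_inj_on_image_eq[OF T V TV])
  moreover have "(\<Sum>b\<in>C. \<phi> b *\<^sub>R b) \<in> V"
    using CV V by (auto intro!: subspace_sum subspace_scale)
  ultimately obtain x where x: "x \<in> V" "T x = (\<Sum>b\<in>C. \<phi> b *\<^sub>R b)"
    by (metis imageE)
  then have "(\<Sum>b\<in>C. (B x b - \<phi> b) *\<^sub>R b) = 0"
    unfolding T_def by (simp add: scaleR_diff_left sum_subtractf)
  then have "\<forall>b\<in>C. B x b - \<phi> b = 0" by (rule coeffs_zero)
  then have "\<forall>w\<in>V. B x w - \<phi> w = 0"
    by (rule vanish[OF linear_compose_sub[OF bilinear_linear_right[OF B] \<phi>]])
  with x(1) show ?thesis by auto
qed

definition representative :: "'a set \<Rightarrow> ('a \<Rightarrow> 'a \<Rightarrow> real) \<Rightarrow> ('a \<Rightarrow> real) \<Rightarrow> 'a" where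
  "representative V B \<phi> = (THE x. x \<in> V \<and> (\<forall>w\<in>V. B x w = \<phi> w))"

lemma representative_unique:
  fixes B :: "'a::euclidean_space \<Rightarrow> 'a \<Rightarrow> real"
  assumes V: "subspace V" and B: "bilinear B" and nd: "nondegenerate_on B V"
    and "x \<in> V" "\<And>w. w \<in> V \<Longrightarrow> B x w = \<phi> w"
  shows "representative V B \<phi> = x"
  unfolding representative_def
  by (rule the_equality) (use assms nondegenerate_on_eqI[OF V B nd] in auto)

lemma representative:
  fixes B :: "'a::euclidean_space \<Rightarrow> 'a \<Rightarrow> real"
  assumes V: "subspace V" and B: "bilinear B" and nd: "nondegenerate_on B V"
    and \<phi>: "linear \<phi>"
  shows "representative V B \<phi> \<in> V" "w \<in> V \<Longrightarrow> B (representative V B \<phi>) w = \<phi> w"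
  using nondegenerate_on_represents[OF assms] representative_unique[OF V B nd] by metis+

definition dual_basis :: "('a::real_vector \<Rightarrow> 'a \<Rightarrow> real) \<Rightarrow> 'a set \<Rightarrow> 'a set \<Rightarrow> ('a \<Rightarrow> 'a) \<Rightarrow> bool"
  where "dual_basis B V C e \<longleftrightarrow> finite C \<and> C \<subseteq> V \<and> e ` C \<subseteq> V \<and>
    (\<forall>c\<in>C. \<forall>c'\<in>C. B c' (e c) = (if c' = c then 1 else 0)) \<and>
    (\<forall>x\<in>V. x = (\<Sum>c\<in>C. B x (e c) *\<^sub>R c))"

lemma dual_basisD:
  assumes "dual_basis B V C e"
  shows "finite C" "c \<in> C \<Longrightarrow> c \<in> V" "c \<in> C \<Longrightarrow> e c \<in> V"
    "c \<in> C \<Longrightarrow> c' \<in> C \<Longrightarrow> B c' (e c) = (if c' = c then 1 else 0)"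
    "x \<in> V \<Longrightarrow> x = (\<Sum>c\<in>C. B x (e c) *\<^sub>R c)"
  using assms unfolding dual_basis_def by blast+

lemma dual_basis_expand:
  assumes "dual_basis B V C e" "linear f" "x \<in> V"
  shows "f x = (\<Sum>c\<in>C. B x (e c) *\<^sub>R f c)"
  using dual_basisD(5)[OF assms(1,3)] linear_sum[OF assms(2)] linear_scale[OF assms(2)]
  by (metis (no_types, lifting) sum.cong)

lemma sum_mult_delta: "finite C \<Longrightarrow> c \<in> C \<Longrightarrow> (\<Sum>c'\<in>C. u c' * (if c' = c then 1 else 0)) = (u c :: real)"
  by (simp add: if_distrib cong: if_cong)

lemma dual_basis_exists:
  fixes B :: "'a::euclidean_space \<Rightarrow> 'a \<Rightarrow> real"
  assumes V: "subspace V" and B: "bilinear B" and sym: "sym_form B" and nd: "nondegenerate_on B V"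
  obtains C e where "dual_basis B V C e"
proof -
  obtain C where C: "independent C" "span C = V"
    using subspace_eq_span_basis[OF V] .
  have fin: "finite C" using C(1) finiteI_independent by blast
  have CV: "C \<subseteq> V" using span_superset[of C] C(2) by simp
  have "\<exists>x\<in>V. \<forall>c'\<in>C. B c' x = (if c' = c then 1 else 0)" for c
  proof -
    obtain \<phi> where \<phi>: "linear \<phi>" "\<forall>c'\<in>C. \<phi> c' = (if c' = c then 1 else (0::real))"
      using linear_independent_extend[OF C(1), of "\<lambda>c'. if c' = c then 1 else 0"] by blast
    obtain x where "x \<in> V" "\<forall>w\<in>V. B x w = \<phi> w"
      using nondegenerate_on_represents[OF V B nd \<phi>(1)] by blast
    with \<phi>(2) CV show ?thesis by (metis subsetD sym_formD[OF sym])
  qed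
  then obtain e where e: "\<And>c. e c \<in> V" "\<And>c c'. c' \<in> C \<Longrightarrow> B c' (e c) = (if c' = c then 1 else 0)"
    by metis
  have "x = (\<Sum>c\<in>C. B x (e c) *\<^sub>R c)" if "x \<in> V" for x
  proof -
    have x: "x = (\<Sum>c\<in>C. representation C x c *\<^sub>R c)"
      using sum_representation_eq[OF C(1) _ fin] that C(2) by simp
    have "B x (e c) = representation C x c" if "c \<in> C" for c
      by (subst x) (simp add: bilinear_simps[OF B] e(2) sum_mult_delta[OF fin that])
    then show ?thesis using x by (metis (no_types, lifting) sum.cong)
  qed
  then have "dual_basis B V C e"
    unfolding dual_basis_def using fin CV e by auto
  then show thesis ..
qed

text \<open>\<open>trace_on\<close> uses some basis \<open>A\<close> of \<open>V\<close>; expanding each \<open>a \<in> A\<close> in the dual pair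
  \<open>(C, e)\<close> and each \<open>f c\<close> in \<open>A\<close> moves the sum from \<open>A\<close> onto \<open>C\<close>.\<close>

lemma trace_on_dual_basis:
  fixes B :: "'a::euclidean_space \<Rightarrow> 'a \<Rightarrow> real"
  assumes V: "subspace V" and B: "bilinear B" and d: "dual_basis B V C e"
    and f: "linear f" and fV: "\<And>x. x \<in> V \<Longrightarrow> f x \<in> V"
  shows "trace_on V f = (\<Sum>c\<in>C. B (f c) (e c))"
proof -
  define A where "A = (SOME A. independent A \<and> span A = V)"
  have "\<exists>A. independent A \<and> span A = V"
    using subspace_eq_span_basis[OF V] by metis
  then have A: "independent A" "span A = V"
    unfolding A_def by (metis (mono_tags, lifting) someI_ex)+
  have finA: "finite A" using A(1) finiteI_independent by blast
  have AV: "a \<in> A \<Longrightarrow> a \<in> V" for a using span_superset[of A] A(2) by auto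
  let ?r = "representation A"
  have fC: "f c \<in> span A" if "c \<in> C" for c using fV dual_basisD(2)[OF d that] A(2) by simp
  have "?r (f a) a = (\<Sum>c\<in>C. B a (e c) * ?r (f c) a)" if "a \<in> A" for a
    using dual_basis_expand[OF d f AV[OF that]] fC
    by (simp add: representation_sum[OF A(1)] representation_scale[OF A(1)] span_scale)
  then have "trace_on V f = (\<Sum>a\<in>A. \<Sum>c\<in>C. B a (e c) * ?r (f c) a)"
    unfolding trace_on_def Let_def A_def[symmetric] by simp
  also have "\<dots> = (\<Sum>c\<in>C. B (\<Sum>a\<in>A. ?r (f c) a *\<^sub>R a) (e c))"
    by (subst sum.swap) (simp add: bilinear_simps[OF B] mult.commute)
  also have "\<dots> = (\<Sum>c\<in>C. B (f c) (e c))"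
    using sum_representation_eq[OF A(1) fC finA] by simp
  finally show ?thesis .
qed

lemma dual_basis_orthogonal_Un:
  assumes B: "bilinear B" and sym: "sym_form B"
    and d1: "dual_basis B V1 C1 e1" and d2: "dual_basis B V2 C2 e2"
    and orth: "\<And>x y. x \<in> V1 \<Longrightarrow> y \<in> V2 \<Longrightarrow> B x y = 0"
    and sub: "V1 \<subseteq> V" "V2 \<subseteq> V" and dec: "\<And>x. x \<in> V \<Longrightarrow> \<exists>a\<in>V1. \<exists>b\<in>V2. x = a + b"
  shows "C1 \<inter> C2 = {}" "dual_basis B V (C1 \<union> C2) (\<lambda>c. if c \<in> C1 then e1 c else e2 c)"
proof -
  note D1 = dual_basisD[OF d1] and D2 = dual_basisD[OF d2]
  have orth': "B y x = 0" if "x \<in> V1" "y \<in> V2" for x y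
    using orth[OF that] sym_formD[OF sym] by metis
  show disj: "C1 \<inter> C2 = {}"
    using D1(3,4) D2(2) orth' by fastforce
  define e where "e c = (if c \<in> C1 then e1 c else e2 c)" for c
  have e1: "c \<in> C1 \<Longrightarrow> e c = e1 c" and e2: "c \<in> C2 \<Longrightarrow> e c = e2 c" for c
    unfolding e_def using disj by auto
  have "(\<Sum>c\<in>C1. B x (e c) *\<^sub>R c) = a" "(\<Sum>c\<in>C2. B x (e c) *\<^sub>R c) = b"
    if "a \<in> V1" "b \<in> V2" "x = a + b" for x a b
  proof -
    show "(\<Sum>c\<in>C1. B x (e c) *\<^sub>R c) = a"
      using D1(5)[of a] that e1 D1(3) orth' by (simp add: bilinear_simps[OF B] cong: sum.cong)
    show "(\<Sum>c\<in>C2. B x (e c) *\<^sub>R c) = b"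
      using D2(5)[of b] that e2 D2(3) orth by (simp add: bilinear_simps[OF B] cong: sum.cong)
  qed
  then have "x = (\<Sum>c\<in>C1 \<union> C2. B x (e c) *\<^sub>R c)" if "x \<in> V" for x
    using dec[OF that] by (metis sum.union_disjoint[OF D1(1) D2(1) disj])
  moreover have "B c' (e c) = (if c' = c then 1 else 0)" if "c \<in> C1 \<union> C2" "c' \<in> C1 \<union> C2" for c c'
    using that disj D1(2-4) D2(2-4) e1 e2 orth orth' by auto
  ultimately show "dual_basis B V (C1 \<union> C2) (\<lambda>c. if c \<in> C1 then e1 c else e2 c)"
    unfolding dual_basis_def e_def[symmetric] using D1(1-3) D2(1-3) sub e1 e2 by auto
qed

lemma dual_basis_sum_swap:
  fixes F :: "'a::real_vector \<Rightarrow> 'a \<Rightarrow> real"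
  assumes B: "bilinear B" and sym: "sym_form B" and F: "bilinear F"
    and d: "dual_basis B V C e"
  shows "(\<Sum>c\<in>C. F (e c) c) = (\<Sum>c\<in>C. F c (e c))"
proof -
  note D = dual_basisD[OF d]
  have "(\<Sum>c\<in>C. F (e c) c) = (\<Sum>c\<in>C. \<Sum>c'\<in>C. B (e c) (e c') * F c' c)"
    using dual_basis_expand[OF d bilinear_linear_left[OF F] D(3)] by simp
  also have "\<dots> = (\<Sum>c'\<in>C. \<Sum>c\<in>C. B (e c') (e c) * F c' c)"
    by (subst sum.swap) (simp add: sym_formD[OF sym])
  also have "\<dots> = (\<Sum>c'\<in>C. F c' (e c'))"
    using dual_basis_expand[OF d bilinear_linear_right[OF F] D(3)] by (simp add: mult.commute)
  finally show ?thesis .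
qed

section \<open>Levi-Civita product and curvature\<close>

definition koszul :: "('a \<Rightarrow> 'a \<Rightarrow> 'a) \<Rightarrow> ('a \<Rightarrow> 'a \<Rightarrow> real) \<Rightarrow> 'a \<Rightarrow> 'a \<Rightarrow> 'a \<Rightarrow> real" where
  "koszul br B u v w = (B (br u v) w + B (br w u) v + B (br w v) u) / 2"

lemma levi_civita_eq_representative:
  "levi_civita V br B u v = representative V B (koszul br B u v)"
  unfolding levi_civita_def representative_def koszul_def
  by (rule arg_cong[where f = The]) (auto simp: fun_eq_iff field_simps)

lemma linear_koszul:
  assumes "bilinear B" "bilinear br"
  shows "linear (koszul br B u v)"
  by (rule linearI) (simp_all add: koszul_def bilinear_simps[OF assms(1)]
      bilinear_simps[OF assms(2)] field_simps)

lemma curv_eq: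
  "curv V br B u w v = levi_civita V br B (br u w) v
     - (levi_civita V br B u (levi_civita V br B w v) - levi_civita V br B w (levi_civita V br B u v))"
  unfolding curv_def Let_def ..

context
  fixes V :: "'a::euclidean_space set" and br :: "'a \<Rightarrow> 'a \<Rightarrow> 'a" and B :: "'a \<Rightarrow> 'a \<Rightarrow> real"
  assumes V: "subspace V" and B: "bilinear B" and nd: "nondegenerate_on B V"
    and br: "bilinear br"
begin

lemma levi_civita_in: "levi_civita V br B u v \<in> V"
  and levi_civita_koszul: "w \<in> V \<Longrightarrow> B (levi_civita V br B u v) w = koszul br B u v w"
  unfolding levi_civita_eq_representative
  using representative[OF V B nd linear_koszul[OF B br]] by auto

lemma levi_civita_unique:
  "x \<in> V \<Longrightarrow> (\<And>w. w \<in> V \<Longrightarrow> B x w = koszul br B u v w) \<Longrightarrow> levi_civita V br B u v = x"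
  unfolding levi_civita_eq_representative by (rule representative_unique[OF V B nd])

lemma bilinear_levi_civita: "bilinear (levi_civita V br B)"
proof -
  let ?L = "levi_civita V br B"
  have "?L (x + y) v = ?L x v + ?L y v \<and> ?L u (x + y) = ?L u x + ?L u y \<and>
      ?L (c *\<^sub>R x) v = c *\<^sub>R ?L x v \<and> ?L u (c *\<^sub>R x) = c *\<^sub>R ?L u x" for u v x y c
    by (intro conjI; rule levi_civita_unique)
      (simp_all add: levi_civita_in levi_civita_koszul subspace_add[OF V] subspace_scale[OF V]
        bilinear_simps[OF B] bilinear_simps[OF br] koszul_def add_divide_distrib distrib_left)
  then show ?thesis
    unfolding bilinear_def linear_iff by simp
qed

lemma linear_curv: "linear (\<lambda>w. curv V br B u w v)"
  using bilinear_levi_civita br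
  by (simp add: curv_def Let_def linear_iff bilinear_simps algebra_simps)

end

section \<open>Metric Lie algebras with nondegenerate center\<close>

locale metric_lie_algebra =
  fixes br :: "'a::euclidean_space \<Rightarrow> 'a \<Rightarrow> 'a" and B :: "'a \<Rightarrow> 'a \<Rightarrow> real"
  assumes lie: "lie_algebra br"
    and B_bilinear: "bilinear B" and B_sym: "sym_form B"
    and B_nondeg: "nondegenerate_on B UNIV"
    and center_nondeg: "nondegenerate_on B (center br)"
begin

abbreviation "Z \<equiv> center br"
abbreviation "G \<equiv> gpart br B"
abbreviation "pz \<equiv> proj_center br B"
abbreviation "om \<equiv> omega br B"
abbreviation "bg \<equiv> br_g br B"
abbreviation "ads \<equiv> ad_star br B"

lemmas B_simps = bilinear_simps[OF B_bilinear]

lemma B_commute: "B x y = B y x"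
  using sym_formD[OF B_sym] .

lemma br_bilinear: "bilinear br"
  using lie unfolding lie_algebra_def bilinear_def by blast

lemmas br_simps = bilinear_simps[OF br_bilinear]

lemma br_anticomm: "br y x = - br x y"
proof -
  have "br (x + y) (x + y) = 0" "br x x = 0" "br y y = 0"
    using lie unfolding lie_algebra_def by blast+
  then show ?thesis
    by (simp add: br_simps eq_neg_iff_add_eq_0 add.commute)
qed

lemma br_jacobi: "br x (br y z) + br y (br z x) + br z (br x y) = 0"
  using lie unfolding lie_algebra_def by blast

lemma center_br_left: "z \<in> Z \<Longrightarrow> br z x = 0"
  and center_br_right: "z \<in> Z \<Longrightarrow> br x z = 0"
  unfolding center_def using br_anticomm[of z x] by auto

lemma subspace_center: "subspace Z"
  unfolding subspace_def center_def by (simp add: br_simps)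

lemma gpart_iff: "g \<in> G \<longleftrightarrow> (\<forall>z\<in>Z. B g z = 0)"
  unfolding gpart_def orth_compl_def by simp

lemma gpart_orth: "g \<in> G \<Longrightarrow> z \<in> Z \<Longrightarrow> B g z = 0"
  and center_orth: "g \<in> G \<Longrightarrow> z \<in> Z \<Longrightarrow> B z g = 0"
  using gpart_iff B_commute by metis+

lemma subspace_gpart: "subspace G"
  by (auto simp: subspace_def gpart_iff B_simps)

lemma center_gpart_eq_0: "x \<in> Z \<Longrightarrow> x \<in> G \<Longrightarrow> x = 0"
  using nondegenerate_onD[OF center_nondeg] gpart_orth by blast

lemma center_gpart_decomp: "\<exists>z\<in>Z. x - z \<in> G"
proof -
  let ?z = "representative Z B (B x)"
  have "?z \<in> Z" "w \<in> Z \<Longrightarrow> B ?z w = B x w" for w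
    using representative[OF subspace_center B_bilinear center_nondeg
        bilinear_linear_right[OF B_bilinear]]
    by auto
  then have "x - ?z \<in> G"
    unfolding gpart_iff by (simp add: B_simps)
  with \<open>?z \<in> Z\<close> show ?thesis ..
qed

lemma proj_center_unique:
  assumes "z \<in> Z" "x - z \<in> G"
  shows "pz x = z"
  unfolding proj_center_def
proof (rule the_equality)
  fix z' assume z': "z' \<in> Z \<and> x - z' \<in> G"
  have "z' - z \<in> Z" using z' assms(1) subspace_diff[OF subspace_center] by blast
  moreover have "(x - z) - (x - z') \<in> G" using z' assms(2) subspace_diff[OF subspace_gpart] by blast
  ultimately show "z' = z"
    using center_gpart_eq_0[of "z' - z"] by simp
qed (use assms in blast)

lemma proj_center: "pz x \<in> Z" "x - pz x \<in> G"
  using center_gpart_decomp[of x] proj_center_unique by auto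

lemma linear_proj_center: "linear pz"
proof (rule linearI)
  show "pz (x + y) = pz x + pz y" for x y
    using proj_center[of x] proj_center[of y] subspace_add[OF subspace_center]
      subspace_add[OF subspace_gpart, of "x - pz x" "y - pz y"]
    by (intro proj_center_unique) (auto simp: algebra_simps)
  show "pz (c *\<^sub>R x) = c *\<^sub>R pz x" for c x
    using proj_center[of x] subspace_scale[OF subspace_center]
      subspace_scale[OF subspace_gpart, of "x - pz x" c]
    by (intro proj_center_unique) (auto simp: algebra_simps)
qed

lemma gpart_nondeg: "nondegenerate_on B G"
  unfolding nondegenerate_on_def
proof (intro ballI impI)
  fix x assume x: "x \<in> G" and h: "\<forall>y\<in>G. B x y = 0"
  have "B x y = 0" for y
  proof -
    have "B x y = B x (y - pz y) + B x (pz y)"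
      by (simp add: B_simps)
    also have "\<dots> = 0"
      using h proj_center[of y] gpart_orth[OF x] by simp
    finally show ?thesis .
  qed
  then show "x = 0"
    using nondegenerate_onD[OF B_nondeg] by blast
qed

lemma omega_in_center: "om u v \<in> Z"
  and br_g_in_gpart: "bg u v \<in> G"
  and br_split: "br u v = bg u v + om u v"
  unfolding omega_def br_g_def using proj_center by auto

lemma bilinear_omega: "bilinear om"
  unfolding omega_def[abs_def] by (rule linear_compose_bilinear[OF linear_proj_center br_bilinear])

lemma bilinear_br_g: "bilinear bg"
  unfolding br_g_def[abs_def] using bilinear_diff[OF br_bilinear bilinear_omega]
  by (simp add: omega_def)

lemmas om_simps = bilinear_simps[OF bilinear_omega]
lemmas bg_simps = bilinear_simps[OF bilinear_br_g]

lemma omega_anticomm: "om y x = - om x y"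
  unfolding omega_def by (simp add: br_anticomm[of y x] linear_neg[OF linear_proj_center])

lemma br_g_anticomm: "bg y x = - bg x y"
  using br_split[of x y] br_split[of y x] br_anticomm[of y x] omega_anticomm[of y x]
  by (simp add: eq_neg_iff_add_eq_0 algebra_simps)

definition jmap :: "'a \<Rightarrow> 'a \<Rightarrow> 'a" where
  "jmap z u = representative G B (\<lambda>w. B z (om u w))"

lemma linear_jmap_functional: "linear (\<lambda>w. B z (om u w))"
  using linear_compose[OF bilinear_linear_right[OF bilinear_omega] bilinear_linear_right[OF B_bilinear]]
  by (simp add: o_def)

lemma jmap_in_gpart: "jmap z u \<in> G"
  and jmap_inner: "w \<in> G \<Longrightarrow> B (jmap z u) w = B z (om u w)"
  unfolding jmap_def
  using representative[OF subspace_gpart B_bilinear gpart_nondeg linear_jmap_functional] by auto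

lemma jmap_unique: "x \<in> G \<Longrightarrow> (\<And>w. w \<in> G \<Longrightarrow> B x w = B z (om u w)) \<Longrightarrow> jmap z u = x"
  unfolding jmap_def by (rule representative_unique[OF subspace_gpart B_bilinear gpart_nondeg])

lemma bilinear_jmap: "bilinear jmap"
  unfolding bilinear_def linear_iff
  by (intro conjI allI; rule jmap_unique)
    (simp_all add: jmap_in_gpart jmap_inner subspace_add[OF subspace_gpart]
      subspace_scale[OF subspace_gpart] B_simps om_simps)

lemmas jmap_simps = bilinear_simps[OF bilinear_jmap]

lemma jmap_skew: "x \<in> G \<Longrightarrow> v \<in> G \<Longrightarrow> B (jmap z x) v = - B x (jmap z v)"
  using jmap_inner[of v z x] jmap_inner[of x z v] omega_anticomm[of v x] B_commute[of x "jmap z v"]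
  by (simp add: B_simps)

lemma ad_star_eq_representative: "ads u w = representative G B (\<lambda>v. B (bg u v) w)"
  unfolding ad_star_def representative_def
  by (rule arg_cong[where f = The]) (auto simp: B_commute)

lemma ad_star_in_gpart: "ads u w \<in> G"
  and ad_star_adjoint: "v \<in> G \<Longrightarrow> B (bg u v) w = B v (ads u w)"
  unfolding ad_star_eq_representative
  using representative[OF subspace_gpart B_bilinear gpart_nondeg
      linear_compose[OF bilinear_linear_right[OF bilinear_br_g] bilinear_linear_left[OF B_bilinear],
        unfolded o_def]]
  by (auto simp: B_commute)

abbreviation "LG \<equiv> levi_civita G bg B"
abbreviation "LH \<equiv> levi_civita UNIV br B"

lemmas LG_in_gpart = levi_civita_in[OF subspace_gpart B_bilinear gpart_nondeg bilinear_br_g]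
lemmas LG_koszul = levi_civita_koszul[OF subspace_gpart B_bilinear gpart_nondeg bilinear_br_g]
lemmas LG_simps =
  bilinear_simps[OF bilinear_levi_civita[OF subspace_gpart B_bilinear gpart_nondeg bilinear_br_g]]
lemmas LH_simps =
  bilinear_simps[OF bilinear_levi_civita[OF subspace_UNIV B_bilinear B_nondeg br_bilinear]]

lemmas gpart_center_simps =
  gpart_orth center_orth omega_in_center br_g_in_gpart jmap_in_gpart LG_in_gpart

lemma levi_civita_split:
  assumes a: "a \<in> G" and c: "c \<in> G" and s: "s \<in> Z" and t: "t \<in> Z"
  shows "LH (a + s) (c + t) = LG a c + (1/2) *\<^sub>R om a c - (1/2) *\<^sub>R jmap t a - (1/2) *\<^sub>R jmap s c"
proof (rule levi_civita_unique[OF subspace_UNIV B_bilinear B_nondeg br_bilinear], simp)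
  fix w
  define e r where "e = w - pz w" and "r = pz w"
  have e: "e \<in> G" and r: "r \<in> Z" and w: "w = e + r"
    unfolding e_def r_def using proj_center by auto
  have brackets: "br (a + s) (c + t) = br a c" "br w (a + s) = br e a" "br w (c + t) = br e c"
    using s t r unfolding w by (simp_all add: br_simps center_br_left center_br_right)
  have "koszul br B (a + s) (c + t) w = (B (bg a c) e + B (bg e a) c + B (bg e c) a
      + B (om a c) r + B (om e a) t + B (om e c) s) / 2"
    unfolding koszul_def brackets unfolding br_split[of a c] br_split[of e a] br_split[of e c] w
    using a c e r s t by (simp add: B_simps gpart_center_simps)
  moreover have "B (LG a c) w = (B (bg a c) e + B (bg e a) c + B (bg e c) a) / 2"
    unfolding w using e r by (simp add: B_simps gpart_center_simps LG_koszul koszul_def)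
  moreover have "B (om a c) w = B (om a c) r"
    unfolding w using e by (simp add: B_simps gpart_center_simps)
  moreover have "B (jmap t a) w = - B (om e a) t" "B (jmap s c) w = - B (om e c) s"
    unfolding w using e r
    by (simp_all add: B_simps gpart_center_simps jmap_inner omega_anticomm[of _ e]
        B_commute[of _ "om _ _"])
  ultimately show "B (LG a c + (1/2) *\<^sub>R om a c - (1/2) *\<^sub>R jmap t a - (1/2) *\<^sub>R jmap s c) w
      = koszul br B (a + s) (c + t) w"
    by (simp add: B_simps field_simps)
qed

lemma levi_civita_gpart: "a \<in> G \<Longrightarrow> c \<in> G \<Longrightarrow> LH a c = LG a c + (1/2) *\<^sub>R om a c"
  using levi_civita_split[of a c 0 0] by (simp add: subspace_0[OF subspace_center] jmap_simps)

lemma levi_civita_center_left: "s \<in> Z \<Longrightarrow> c \<in> G \<Longrightarrow> LH s c = - (1/2) *\<^sub>R jmap s c"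
  using levi_civita_split[of 0 c s 0]
  by (simp add: subspace_0[OF subspace_gpart] subspace_0[OF subspace_center] jmap_simps LG_simps om_simps)

lemma levi_civita_center_right: "a \<in> G \<Longrightarrow> t \<in> Z \<Longrightarrow> LH a t = - (1/2) *\<^sub>R jmap t a"
  using levi_civita_split[of a 0 0 t]
  by (simp add: subspace_0[OF subspace_gpart] subspace_0[OF subspace_center] jmap_simps LG_simps om_simps)

lemma levi_civita_center: "s \<in> Z \<Longrightarrow> t \<in> Z \<Longrightarrow> LH s t = 0"
  using levi_civita_split[of 0 0 s t]
  by (simp add: subspace_0[OF subspace_gpart] jmap_simps LG_simps om_simps)

lemma curv_gpart_inner:
  assumes u: "u \<in> G" and v: "v \<in> G" and b: "b \<in> G" and q: "q \<in> G"
  shows "B (curv UNIV br B u b v) q = B (curv G bg B u b v) q - (1/2) * B (om u b) (om v q)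
     + (1/4) * B (om b v) (om u q) - (1/4) * B (om u v) (om b q)"
proof -
  have LH_br: "LH (br u b) v = LG (bg u b) v + (1/2) *\<^sub>R om (bg u b) v - (1/2) *\<^sub>R jmap (om u b) v"
    using br_split[of u b] levi_civita_gpart[OF br_g_in_gpart v]
      levi_civita_center_left[OF omega_in_center v]
    by (simp add: LH_simps)
  have LH_LH: "LH x (LH y v) = LG x (LG y v) + (1/2) *\<^sub>R om x (LG y v) - (1/4) *\<^sub>R jmap (om y v) x"
    if "x \<in> G" "y \<in> G" for x y
    using levi_civita_gpart[OF that(2) v] levi_civita_gpart[OF that(1) LG_in_gpart]
      levi_civita_center_right[OF that(1) omega_in_center]
    by (simp add: LH_simps)
  show ?thesis
    using q unfolding curv_eq LH_br LH_LH[OF u b] LH_LH[OF b u]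
    by (simp add: B_simps gpart_center_simps jmap_inner)
qed

lemma curv_center_inner:
  assumes u: "u \<in> G" and v: "v \<in> G" and z: "z \<in> Z" and q: "q \<in> Z"
  shows "B (curv UNIV br B u z v) q = (1/4) * B (om u (jmap z v)) q"
proof -
  have "LH (br u z) v = 0"
    using center_br_right[OF z] by (simp add: LH_simps)
  moreover have "LH u (LH z v) = - (1/2) *\<^sub>R LG u (jmap z v) - (1/4) *\<^sub>R om u (jmap z v)"
    using levi_civita_center_left[OF z v] levi_civita_gpart[OF u jmap_in_gpart]
    by (simp add: LH_simps algebra_simps)
  moreover have "LH z (LH u v) = - (1/2) *\<^sub>R jmap z (LG u v)"
    using levi_civita_gpart[OF u v] levi_civita_center_left[OF z LG_in_gpart]
      levi_civita_center[OF z omega_in_center]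
    by (simp add: LH_simps)
  ultimately show ?thesis
    using q unfolding curv_eq by (simp add: B_simps gpart_center_simps)
qed

lemma ric_dual_bases:
  assumes dG: "dual_basis B G Cg eg" and dZ: "dual_basis B Z Cz ez"
  shows "ric UNIV br B u v =
    (\<Sum>c\<in>Cg. B (curv UNIV br B u c v) (eg c)) + (\<Sum>c\<in>Cz. B (curv UNIV br B u c v) (ez c))"
proof -
  have decomp: "\<exists>a\<in>G. \<exists>b\<in>Z. x = a + b" for x
    using proj_center[of x] by (metis diff_add_cancel)
  note Un =
    dual_basis_orthogonal_Un[OF B_bilinear B_sym dG dZ gpart_orth subset_UNIV subset_UNIV decomp]
  have "ric UNIV br B u v = (\<Sum>c\<in>Cg \<union> Cz. B (curv UNIV br B u c v) (if c \<in> Cg then eg c else ez c))"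
    unfolding ric_def
    by (rule trace_on_dual_basis[OF subspace_UNIV B_bilinear Un(2)
          linear_curv[OF subspace_UNIV B_bilinear B_nondeg br_bilinear]]) simp_all
  also have "\<dots> = (\<Sum>c\<in>Cg. B (curv UNIV br B u c v) (eg c)) + (\<Sum>c\<in>Cz. B (curv UNIV br B u c v) (ez c))"
    using Un(1) by (auto simp: sum.union_disjoint dual_basisD(1)[OF dG] dual_basisD(1)[OF dZ]
        intro!: sum.cong)
  finally show ?thesis .
qed

lemma ric_gpart_dual_basis:
  assumes dG: "dual_basis B G Cg eg"
  shows "ric G bg B u v = (\<Sum>c\<in>Cg. B (curv G bg B u c v) (eg c))"
  unfolding ric_def
  by (rule trace_on_dual_basis[OF subspace_gpart B_bilinear dG
        linear_curv[OF subspace_gpart B_bilinear gpart_nondeg bilinear_br_g]])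
    (simp add: curv_eq LG_in_gpart subspace_diff[OF subspace_gpart])


lemma sum_curv_gpart:
  assumes u: "u \<in> G" and v: "v \<in> G" and dG: "dual_basis B G Cg eg"
  shows "(\<Sum>c\<in>Cg. B (curv UNIV br B u c v) (eg c))
    = ric G bg B u v - (3/4) * (\<Sum>c\<in>Cg. B (om u c) (om v (eg c)))"
proof -
  note D = dual_basisD[OF dG]
  define S where "S = (\<Sum>c\<in>Cg. B (om u c) (om v (eg c)))"
  define S2 where "S2 = (\<Sum>c\<in>Cg. B (om c v) (om u (eg c)))"
  define S3 where "S3 = (\<Sum>c\<in>Cg. B (om u v) (om c (eg c)))"
  have "(\<Sum>c\<in>Cg. B (curv UNIV br B u c v) (eg c))
      = ric G bg B u v - (1/2) * S + (1/4) * S2 - (1/4) * S3"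
    unfolding ric_gpart_dual_basis[OF dG] S_def S2_def S3_def using D(2,3)
    by (simp add: curv_gpart_inner[OF u v] sum.distrib sum_subtractf sum_distrib_left cong: sum.cong)
  moreover have "S3 = - S3"
    using dual_basis_sum_swap[OF B_bilinear B_sym
        linear_compose_bilinear[OF bilinear_linear_right[OF B_bilinear] bilinear_omega] dG]
    unfolding S3_def by (simp add: omega_anticomm[of "eg _"] om_simps B_simps sum_negf)
  moreover have "S2 = - S"
    using dual_basis_sum_swap[OF B_bilinear B_sym
        bilinear_compose_linear[OF B_bilinear bilinear_linear_right[OF bilinear_omega]
          bilinear_linear_right[OF bilinear_omega]] dG]
    unfolding S_def S2_def
    by (simp add: omega_anticomm[of _ v] B_simps sum_negf B_commute[of "om u _"])
  ultimately show ?thesis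
    unfolding S_def by simp
qed

lemma sum_curv_center:
  assumes u: "u \<in> G" and v: "v \<in> G" and dZ: "dual_basis B Z Cz ez"
  shows "(\<Sum>c\<in>Cz. B (curv UNIV br B u c v) (ez c)) = (1/4) * (\<Sum>c\<in>Cz. B (jmap (ez c) u) (jmap c v))"
proof -
  have "B (curv UNIV br B u c v) (ez c) = (1/4) * B (jmap (ez c) u) (jmap c v)" if "c \<in> Cz" for c
    using curv_center_inner[OF u v] dual_basisD(2,3)[OF dZ that]
      jmap_inner[OF jmap_in_gpart, of "ez c" u c v] B_commute[of "om u (jmap c v)"]
    by simp
  then show ?thesis
    unfolding sum_distrib_left by (rule sum.cong[OF refl])
qed

lemma sum_omega_eq_sum_jmap:
  assumes u: "u \<in> G" and v: "v \<in> G" and dG: "dual_basis B G Cg eg" and dZ: "dual_basis B Z Cz ez"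
  shows "(\<Sum>c\<in>Cg. B (om u c) (om v (eg c))) = (\<Sum>z\<in>Cz. B (jmap (ez z) u) (jmap z v))"
proof -
  have "B (om u c) (om v (eg c)) = (\<Sum>z\<in>Cz. B (jmap (ez z) u) c * B (jmap z v) (eg c))"
    if "c \<in> Cg" for c
    using dual_basis_expand[OF dZ bilinear_linear_left[OF B_bilinear] omega_in_center,
        of u c "om v (eg c)"]
      dual_basisD(2,3)[OF dG that]
    by (simp add: jmap_inner B_commute[of "om u c"])
  then have "(\<Sum>c\<in>Cg. B (om u c) (om v (eg c)))
      = (\<Sum>z\<in>Cz. \<Sum>c\<in>Cg. B (jmap (ez z) u) c * B (jmap z v) (eg c))"
    by (simp add: sum.swap[of _ Cz])
  also have "\<dots> = (\<Sum>z\<in>Cz. B (jmap (ez z) u) (jmap z v))"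
    using dual_basis_expand[OF dG bilinear_linear_right[OF B_bilinear] jmap_in_gpart]
    by (simp add: mult.commute)
  finally show ?thesis .
qed

lemma ric_eq_ric_gpart:
  assumes u: "u \<in> G" and v: "v \<in> G" and dZ: "dual_basis B Z Cz ez"
  shows "ric UNIV br B u v = ric G bg B u v - (1/2) * (\<Sum>z\<in>Cz. B (jmap (ez z) u) (jmap z v))"
proof -
  obtain Cg eg where dG: "dual_basis B G Cg eg"
    using dual_basis_exists[OF subspace_gpart B_bilinear B_sym gpart_nondeg] .
  show ?thesis
    unfolding ric_dual_bases[OF dG dZ] sum_curv_gpart[OF u v dG] sum_curv_center[OF u v dZ]
      sum_omega_eq_sum_jmap[OF u v dG dZ]
    by simp
qed

lemma omega_center_right: "z \<in> Z \<Longrightarrow> om w z = 0"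
  unfolding omega_def by (simp add: center_br_right linear_0[OF linear_proj_center])

lemma omega_jacobi: "om w (bg u x) + om u (bg x w) + om x (bg w u) = 0"
proof -
  have "om w (br u x) + om u (br x w) + om x (br w u) = 0"
    using arg_cong[OF br_jacobi[of w u x], of pz]
    by (simp add: omega_def linear_add[OF linear_proj_center] linear_0[OF linear_proj_center])
  then show ?thesis
    by (simp add: br_split[of u x] br_split[of x w] br_split[of w u] om_simps
        omega_center_right[OF omega_in_center])
qed

lemma jmap_br_g:
  assumes w: "w \<in> G" and u: "u \<in> G"
  shows "jmap z (bg w u) = ads u (jmap z w) - ads w (jmap z u)"
proof (rule jmap_unique)
  show "ads u (jmap z w) - ads w (jmap z u) \<in> G"
    using ad_star_in_gpart subspace_diff[OF subspace_gpart] by blast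
next
  fix y assume y: "y \<in> G"
  have adjoint: "B (ads x (jmap z x')) y = B z (om x' (bg x y))" for x x'
    by (metis B_commute ad_star_adjoint[OF y] jmap_inner[OF br_g_in_gpart])
  have "om (bg w u) y = om w (bg u y) - om u (bg w y)"
    using omega_jacobi[of w u y] omega_anticomm[of y "bg w u"] br_g_anticomm[of y w]
    by (simp add: om_simps algebra_simps eq_neg_iff_add_eq_0)
  then show "B (ads u (jmap z w) - ads w (jmap z u)) y = B z (om (bg w u) y)"
    by (simp add: B_simps adjoint)
qed

context
  assumes hyp: "\<forall>u\<in>G. \<forall>v\<in>G. \<forall>w\<in>G. om (ads u v) w + om v (ads u w) = 0"
begin

lemma jmap_ad_star:
  assumes u: "u \<in> G" and v: "v \<in> G"
  shows "jmap z (ads u v) = - bg u (jmap z v)"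
proof (rule jmap_unique)
  show "- bg u (jmap z v) \<in> G"
    using br_g_in_gpart subspace_neg[OF subspace_gpart] by blast
next
  fix y assume y: "y \<in> G"
  have "om (ads u v) y = - om v (ads u y)"
    using hyp u v y by (simp add: eq_neg_iff_add_eq_0)
  then show "B (- bg u (jmap z v)) y = B z (om (ads u v) y)"
    using ad_star_adjoint[of "jmap z v" u y] jmap_inner[OF ad_star_in_gpart]
    by (simp add: B_simps om_simps jmap_in_gpart)
qed

lemma jmap_jmap_br_g:
  assumes w: "w \<in> G" and u: "u \<in> G"
  shows "jmap z (jmap z' (bg w u)) = bg (jmap z (jmap z' w)) u + bg w (jmap z (jmap z' u))"
  using jmap_ad_star[OF u jmap_in_gpart, of z z' w] jmap_ad_star[OF w jmap_in_gpart, of z z' u]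
    br_g_anticomm[of u "jmap z (jmap z' w)"]
  by (simp add: jmap_br_g[OF w u] jmap_simps)

lemma derivation_on_jmap_sum:
  "derivation_on G bg (\<lambda>x. a *\<^sub>R (\<Sum>z\<in>C. jmap z (jmap (f z) x)))"
  unfolding derivation_on_def
  by (simp add: jmap_in_gpart subspace_scale[OF subspace_gpart] subspace_sum[OF subspace_gpart]
      jmap_simps jmap_jmap_br_g bg_simps sum.distrib scaleR_add_right scaleR_sum_right algebra_simps)

end

lemma ricci_soliton_gpart:
  assumes hyp: "\<forall>u\<in>G. \<forall>v\<in>G. \<forall>w\<in>G. om (ads u v) w + om v (ads u w) = 0"
    and einstein: "einstein UNIV br B"
  shows "ricci_soliton G bg B"
proof -
  obtain Cz ez where dZ: "dual_basis B Z Cz ez"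
    using dual_basis_exists[OF subspace_center B_bilinear B_sym center_nondeg] .
  obtain c where c: "\<And>u v. ric UNIV br B u v = c * B u v"
    using einstein unfolding einstein_def by blast
  define D where "D x = - (1/2) *\<^sub>R (\<Sum>z\<in>Cz. jmap z (jmap (ez z) x))" for x
  have "derivation_on G bg D"
    unfolding D_def[abs_def] by (rule derivation_on_jmap_sum[OF hyp])
  moreover have "ric G bg B u v = c * B u v + B (D u) v" if u: "u \<in> G" and v: "v \<in> G" for u v
  proof -
    have "B (D u) v = (1/2) * (\<Sum>z\<in>Cz. B (jmap (ez z) u) (jmap z v))"
      unfolding D_def using jmap_skew[OF jmap_in_gpart v]
      by (simp add: B_simps sum_distrib_left sum_negf)
    then show ?thesis
      using ric_eq_ric_gpart[OF u v dZ] c[of u v] by simp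
  qed
  ultimately show ?thesis
    unfolding ricci_soliton_def by blast
qed

end

(* Only nondegeneracy is used: neither the positivity of B on the center (fifth hypothesis)
   nor the Lorentzian signature nor nilpotency beyond the Lie algebra axioms. *)

theorem proposition3p3:
  fixes br :: "'a::euclidean_space \<Rightarrow> 'a \<Rightarrow> 'a"
    and B :: "'a \<Rightarrow> 'a \<Rightarrow> real"
  assumes "nilpotent_lie br"
    and "lorentzian B"
    and "einstein UNIV br B"
    and "\<forall>z\<in>center br. (\<forall>y\<in>center br. B z y = 0) \<longrightarrow> z = 0"
    and "\<forall>z\<in>center br. z \<noteq> 0 \<longrightarrow> B z z > 0"
    and "\<forall>u\<in>gpart br B. \<forall>v\<in>gpart br B. \<forall>w\<in>gpart br B.
           omega br B (ad_star br B u v) w + omega br B v (ad_star br B u w) = 0"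
  shows "ricci_soliton (gpart br B) (br_g br B) B"
proof -
  interpret metric_lie_algebra br B
  proof
    show "lie_algebra br"
      using assms(1) unfolding nilpotent_lie_def by blast
    show "bilinear B" "sym_form B"
      using assms(2) unfolding lorentzian_def bilinear_form_iff_bilinear by blast+
    show "nondegenerate_on B UNIV"
      using lorentzian_nondegenerate[OF assms(2)] .
    show "nondegenerate_on B (center br)"
      using assms(4) unfolding nondegenerate_on_def .
  qed
  show ?thesis
    using ricci_soliton_gpart[OF assms(6,3)] .
qed

end
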